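(* Let $G$ be a subgroup of $O_d(\mathbb R)$, let $\Omega$ be a finite set and let \[\mathcal M=\{\boldsymbol\xi=(\xi_\omega)_{\omega\in\Omega}\in(\mathbb R^d)^\Omega:\ \text{the }\xi_\omega\text{ are pairwise distinct and }\boldsymbol\xi\text{ is }G\text{-invariant}\}.\] Then $\mathcal M$ is a submanifold of $(\mathbb R^d)^\Omega$.
   Context: A family $\boldsymbol\xi=(\xi_\omega)_{\omega\in\Omega}\in(\mathbb R^d)^\Omega$ is $G$-invariant if for every $R\in G$ there is a map $\chi(R):\Omega\to\Omega$ with $R\xi_\omega=\xi_{\chi(R)\omega}$ for all $\omega\in\Omega$. *)

theory Defs
  imports "HOL-Analysis.Analysis"
begin

text \<open>C-infinity smoothness on an open set: all iterated (Frechet/directional) derivatives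
  exist. D vs x is the iterated derivative of f at x in the directions listed in vs.\<close>
definition smooth_on :: "'a::euclidean_space set \<Rightarrow> ('a \<Rightarrow> 'b::euclidean_space) \<Rightarrow> bool" where
  "smooth_on U f \<longleftrightarrow>
     (\<exists>D :: 'a list \<Rightarrow> 'a \<Rightarrow> 'b.
        (\<forall>x\<in>U. D [] x = f x) \<and>
        (\<forall>vs. \<forall>x\<in>U. (D vs has_derivative (\<lambda>h. D (h # vs) x)) (at x)) \<and>
        (\<forall>vs. continuous_on U (D vs)))"

definition diffeomorphism_between ::
  "'a::euclidean_space set \<Rightarrow> 'a set \<Rightarrow> ('a \<Rightarrow> 'a) \<Rightarrow> ('a \<Rightarrow> 'a) \<Rightarrow> bool" where
  "diffeomorphism_between U V \<phi> \<psi> \<longleftrightarrow>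
     open U \<and> open V \<and> smooth_on U \<phi> \<and> smooth_on V \<psi> \<and>
     \<phi> ` U = V \<and> \<psi> ` V = U \<and> (\<forall>x\<in>U. \<psi> (\<phi> x) = x) \<and> (\<forall>y\<in>V. \<phi> (\<psi> y) = y)"

text \<open>Embedded smooth submanifold of a Euclidean space (slice-chart definition; the
  dimension may vary from point to point, i.e. between connected components).\<close>
definition submanifold :: "'a::euclidean_space set \<Rightarrow> bool" where
  "submanifold M \<longleftrightarrow>
     (\<forall>p\<in>M. \<exists>U V \<phi> \<psi> L. p \<in> U \<and> diffeomorphism_between U V \<phi> \<psi> \<and>
        subspace L \<and> \<phi> ` (M \<inter> U) = V \<inter> L)"

definition orthogonal_subgroup :: "(real^'d^'d) set \<Rightarrow> bool" where
  "orthogonal_subgroup G \<longleftrightarrow>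
     (\<forall>R\<in>G. orthogonal_matrix R) \<and> mat 1 \<in> G \<and>
     (\<forall>R\<in>G. \<forall>S\<in>G. R ** S \<in> G) \<and> (\<forall>R\<in>G. matrix_inv R \<in> G)"

definition G_invariant :: "(real^'d^'d) set \<Rightarrow> real^'d^'w \<Rightarrow> bool" where
  "G_invariant G \<xi> \<longleftrightarrow>
     (\<forall>R\<in>G. \<exists>chi :: 'w \<Rightarrow> 'w. \<forall>\<omega>. R *v (\<xi> $ \<omega>) = \<xi> $ (chi \<omega>))"

end

theory Submission
  imports Defs
begin

text \<open>Near a point \<open>p\<close> of \<open>\<M>\<close> the maps \<open>\<chi>(R)\<close> are rigid. The points of a family
  close to \<open>p\<close> lie near the pairwise well separated points \<open>p\<^sub>\<omega>\<close>, and each \<open>R\<close> is an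
  isometry, so a \<open>G\<close>-invariant family close to \<open>p\<close> must be invariant with the same maps
  \<open>\<chi>(R)\<close> as \<open>p\<close>; it is also automatically injective. Hence near \<open>p\<close> the set \<open>\<M>\<close> coincides
  with the linear subspace of families satisfying \<open>R \<xi>\<^sub>\<omega> = \<xi>\<^sub>\<chi>\<^sub>(\<^sub>R\<^sub>)\<^sub>\<omega>\<close> for all \<open>R\<close>
  and \<open>\<omega>\<close>, and the identity is a slice chart.\<close>

lemma smooth_on_id: "smooth_on U (\<lambda>x::'a::euclidean_space. x)"
proof -
  define D :: "'a list \<Rightarrow> 'a \<Rightarrow> 'a" where
    "D = (\<lambda>vs x. case vs of [] \<Rightarrow> x | [v] \<Rightarrow> v | _ \<Rightarrow> 0)"
  have "(D vs has_derivative (\<lambda>h. D (h # vs) x)) (at x)" for vs x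
    by (cases vs rule: remdups_adj.cases) (simp_all add: D_def)
  moreover have "continuous_on U (D vs)" for vs
    by (cases vs rule: remdups_adj.cases) (simp_all add: D_def)
  ultimately show ?thesis
    unfolding smooth_on_def by (intro exI[of _ D]) (simp add: D_def)
qed

lemma diffeomorphism_between_id: "open U \<Longrightarrow> diffeomorphism_between U U (\<lambda>x. x) (\<lambda>x. x)"
  by (simp add: diffeomorphism_between_def smooth_on_id)

lemma submanifold_if_locally_subspace:
  fixes M :: "'a::euclidean_space set"
  assumes "\<And>p. p \<in> M \<Longrightarrow> \<exists>U L. open U \<and> p \<in> U \<and> subspace L \<and> M \<inter> U = U \<inter> L"
  shows "submanifold M"
  unfolding submanifold_def
proof
  fix p assume "p \<in> M"
  then obtain U L where "open U" "p \<in> U" "subspace L" "M \<inter> U = U \<inter> L"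
    using assms by blast
  then show "\<exists>U V \<phi> \<psi> L. p \<in> U \<and> diffeomorphism_between U V \<phi> \<psi> \<and> subspace L \<and>
      \<phi> ` (M \<inter> U) = V \<inter> L"
    by (intro exI[of _ U] exI[of _ U] exI[of _ "\<lambda>x. x"] exI[of _ "\<lambda>x. x"] exI[of _ L])
      (simp add: diffeomorphism_between_id)
qed

definition equivariant_families ::
  "(real^'d^'d) set \<Rightarrow> (real^'d^'d \<Rightarrow> 'w \<Rightarrow> 'w) \<Rightarrow> (real^'d^'w) set" where
  "equivariant_families G \<sigma> = {\<xi>. \<forall>R\<in>G. \<forall>\<omega>. R *v (\<xi> $ \<omega>) = \<xi> $ (\<sigma> R \<omega>)}"

lemma subspace_equivariant_families: "subspace (equivariant_families G \<sigma>)"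
  by (simp add: subspace_def equivariant_families_def
      matrix_vector_right_distrib matrix_vector_mult_scaleR)

lemma G_invariant_iff_equivariant: "G_invariant G \<xi> \<longleftrightarrow> (\<exists>\<sigma>. \<xi> \<in> equivariant_families G \<sigma>)"
  unfolding G_invariant_def equivariant_families_def by (auto intro: bchoice)

lemma dist_orthogonal_matrix_mult:
  fixes R :: "real^'d^'d"
  assumes "orthogonal_matrix R"
  shows "dist (R *v x) (R *v y) = dist x y"
proof -
  have "orthogonal_transformation (\<lambda>x. R *v x)"
    using assms by (simp add: orthogonal_transformation_matrix matrix_of_matrix_vector_mul)
  then show ?thesis
    by (simp add: orthogonal_transformation_isometry)
qed

lemma injective_family_separated:
  fixes p :: "'a::metric_space^'n"
  assumes "inj (\<lambda>\<omega>. p $ \<omega>)"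
  obtains e where "e > 0" "\<forall>a b. dist (p $ a) (p $ b) < e \<longrightarrow> a = b"
proof -
  define S where "S = (\<lambda>(a, b). dist (p $ a) (p $ b)) ` {(a, b). a \<noteq> b}"
  have "finite S" "\<forall>s\<in>S. s > 0"
    using assms by (auto simp: S_def inj_def)
  then have "Min (insert 1 S) > 0"
    by simp
  moreover have "Min (insert 1 S) \<le> dist (p $ a) (p $ b)" if "a \<noteq> b" for a b
    using \<open>finite S\<close> that by (intro Min_le) (auto simp: S_def)
  ultimately show thesis
    using that by (meson not_le)
qed

lemma separated_family_index_eq:
  fixes \<xi> p :: "'a::metric_space^'n"
  assumes separated: "\<forall>a b. dist (p $ a) (p $ b) < e \<longrightarrow> a = b"
    and "dist \<xi> p < e / 2" "dist (\<xi> $ a) (p $ b) < e / 2"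
  shows "a = b"
proof (rule separated[rule_format])
  have "dist (\<xi> $ a) (p $ a) < e / 2"
    using dist_vec_nth_le \<open>dist \<xi> p < e / 2\<close> by (rule le_less_trans)
  then show "dist (p $ a) (p $ b) < e"
    using dist_triangle3[of "p $ a" "p $ b" "\<xi> $ a"] \<open>dist (\<xi> $ a) (p $ b) < e / 2\<close> by linarith
qed

lemma inj_near_separated_family:
  fixes \<xi> p :: "'a::metric_space^'n"
  assumes "\<forall>a b. dist (p $ a) (p $ b) < e \<longrightarrow> a = b" "dist \<xi> p < e / 2"
  shows "inj (\<lambda>\<omega>. \<xi> $ \<omega>)"
proof (rule injI)
  fix a b assume "\<xi> $ a = \<xi> $ b"
  then have "dist (\<xi> $ a) (p $ b) < e / 2"
    using dist_vec_nth_le \<open>dist \<xi> p < e / 2\<close> by (metis le_less_trans)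
  with assms show "a = b"
    by (rule separated_family_index_eq)
qed

lemma G_invariant_near_separated_family:
  assumes orthogonal: "\<And>R. R \<in> G \<Longrightarrow> orthogonal_matrix R"
    and p: "p \<in> equivariant_families G \<sigma>"
    and separated: "\<forall>a b. dist (p $ a) (p $ b) < e \<longrightarrow> a = b"
    and "dist \<xi> p < e / 2" "G_invariant G \<xi>"
  shows "\<xi> \<in> equivariant_families G \<sigma>"
proof -
  obtain \<sigma>' where \<sigma>': "\<xi> \<in> equivariant_families G \<sigma>'"
    using \<open>G_invariant G \<xi>\<close> G_invariant_iff_equivariant by blast
  have "\<sigma>' R \<omega> = \<sigma> R \<omega>" if "R \<in> G" for R \<omega>
  proof (rule separated_family_index_eq[OF separated \<open>dist \<xi> p < e / 2\<close>])
    have "dist (\<xi> $ \<sigma>' R \<omega>) (p $ \<sigma> R \<omega>) = dist (R *v (\<xi> $ \<omega>)) (R *v (p $ \<omega>))"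
      using \<sigma>' p \<open>R \<in> G\<close> by (simp add: equivariant_families_def)
    also have "\<dots> = dist (\<xi> $ \<omega>) (p $ \<omega>)"
      using orthogonal[OF \<open>R \<in> G\<close>] by (rule dist_orthogonal_matrix_mult)
    also have "\<dots> < e / 2"
      using dist_vec_nth_le \<open>dist \<xi> p < e / 2\<close> by (rule le_less_trans)
    finally show "dist (\<xi> $ \<sigma>' R \<omega>) (p $ \<sigma> R \<omega>) < e / 2" .
  qed
  then show ?thesis
    using \<sigma>' by (simp add: equivariant_families_def)
qed

lemma invariant_injective_families_near_eq_equivariant:
  assumes orthogonal: "\<And>R. R \<in> G \<Longrightarrow> orthogonal_matrix R"
    and p: "p \<in> equivariant_families G \<sigma>"
    and separated: "\<forall>a b. dist (p $ a) (p $ b) < e \<longrightarrow> a = b"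
  shows "{\<xi>. inj (\<lambda>\<omega>. \<xi> $ \<omega>) \<and> G_invariant G \<xi>} \<inter> ball p (e / 2) =
    ball p (e / 2) \<inter> equivariant_families G \<sigma>"
    (is "?M \<inter> ?B = ?B \<inter> ?L")
proof (intro equalityI subsetI)
  fix \<xi> assume "\<xi> \<in> ?M \<inter> ?B"
  then have "dist \<xi> p < e / 2" "G_invariant G \<xi>"
    by (auto simp: dist_commute)
  with G_invariant_near_separated_family[OF orthogonal p separated]
  show "\<xi> \<in> ?B \<inter> ?L"
    using \<open>\<xi> \<in> ?M \<inter> ?B\<close> by blast
next
  fix \<xi> assume \<xi>: "\<xi> \<in> ?B \<inter> ?L"
  then have "dist \<xi> p < e / 2"
    by (metis IntD1 mem_ball dist_commute)
  then have "inj (\<lambda>\<omega>. \<xi> $ \<omega>)"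
    by (rule inj_near_separated_family[OF separated])
  with \<xi> show "\<xi> \<in> ?M \<inter> ?B"
    using G_invariant_iff_equivariant by blast
qed

theorem lemma2p2:
  fixes G :: "(real^'d^'d) set"
  assumes "orthogonal_subgroup G"
  shows "submanifold {\<xi> :: real^'d^'w. inj (\<lambda>\<omega>. \<xi> $ \<omega>) \<and> G_invariant G \<xi>}"
    (is "submanifold ?M")
proof (rule submanifold_if_locally_subspace)
  fix p assume "p \<in> ?M"
  then obtain \<sigma> where p: "p \<in> equivariant_families G \<sigma>"
    using G_invariant_iff_equivariant by blast
  obtain e where "e > 0" and separated: "\<forall>a b. dist (p $ a) (p $ b) < e \<longrightarrow> a = b"
    using injective_family_separated \<open>p \<in> ?M\<close> by auto
  have "\<And>R. R \<in> G \<Longrightarrow> orthogonal_matrix R"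
    using assms by (simp add: orthogonal_subgroup_def)
  from invariant_injective_families_near_eq_equivariant[OF this p separated]
  show "\<exists>U L. open U \<and> p \<in> U \<and> subspace L \<and> ?M \<inter> U = U \<inter> L"
    using \<open>e > 0\<close> subspace_equivariant_families
    by (intro exI[of _ "ball p (e / 2)"] exI[of _ "equivariant_families G \<sigma>"]) simp
qed

end
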